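(* For $(x,a)\in\mathbb{R}\times\mathbb{R}_+$ define the operator $\widehat R_{\mathrm{Aff}}(x,a)$ on $\mathcal{S}(\mathbb{R}_+)$ by \[\widehat R_{\mathrm{Aff}}(x,a)\psi(r):=\frac{e^{2\pi i x v}\,v\,(1-e^{v})}{1+v-e^{v}}\,\psi\big(re^{-v}\big),\qquad v:=\lambda^{-1}\!\Big(\frac ra\Big),\ r>0\] (with the prefactor interpreted as its limit $2$ when $v=0$). Then for all $\psi,\phi\in\mathcal{S}(\mathbb{R}_+)$ and $(x,a)\in\mathbb{R}\times\mathbb{R}_+$, \[W_{\mathrm{Aff}}^{\psi,\phi}(x,a)=\big\langle\widehat R_{\mathrm{Aff}}(x,a)\psi,\phi\big\rangle_{L^2(\mathbb{R}_+)}.\]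
   Context: $L^2(\mathbb{R}_+)$ denotes $L^2(\mathbb{R}_+, a^{-1}\,da)$ with inner product $\langle\psi,\phi\rangle=\int_0^\infty\psi\overline\phi\,\frac{da}{a}$. $\mathcal{S}(\mathbb{R}_+)$ is the space of smooth $\psi:\mathbb{R}_+\to\mathbb{C}$ with $x\mapsto\psi(e^x)$ in $\mathcal{S}(\mathbb{R})$. $\lambda(u) := \frac{ue^u}{e^u-1}$ for $u\neq 0$, $\lambda(0):=1$; $\lambda$ is an increasing bijection $\mathbb{R}\to(0,\infty)$ with inverse $\lambda^{-1}$. Affine cross-Wigner transform: $W_{\mathrm{Aff}}^{\psi,\phi}(x,a) := \int_{-\infty}^{\infty}\psi(a\lambda(u))\overline{\phi(a\lambda(-u))}e^{-2\pi i x u}\,du$. *)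

theory Defs
  imports "HOL-Analysis.Analysis"
begin

primrec iter_deriv :: "nat \<Rightarrow> (real \<Rightarrow> complex) \<Rightarrow> real \<Rightarrow> complex" where
  "iter_deriv 0 f = f"
| "iter_deriv (Suc n) f = (\<lambda>x. vector_derivative (iter_deriv n f) (at x))"

definition schwartz :: "(real \<Rightarrow> complex) \<Rightarrow> bool" where
  "schwartz f \<longleftrightarrow>
     (\<forall>n x. (iter_deriv n f has_vector_derivative iter_deriv (Suc n) f x) (at x)) \<and>
     (\<forall>m n. bounded (range (\<lambda>x. complex_of_real (x ^ m) * iter_deriv n f x)))"

definition schwartz_pos :: "(real \<Rightarrow> complex) \<Rightarrow> bool" where
  "schwartz_pos \<psi> \<longleftrightarrow> schwartz (\<lambda>x. \<psi> (exp x))"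

definition lam :: "real \<Rightarrow> real" where
  "lam u = (if u = 0 then 1 else u * exp u / (exp u - 1))"

definition lam_inv :: "real \<Rightarrow> real" where
  "lam_inv r = (THE u. lam u = r)"

text \<open>Inner product of L^2(R_+, da/a).\<close>
definition inner_Rp :: "(real \<Rightarrow> complex) \<Rightarrow> (real \<Rightarrow> complex) \<Rightarrow> complex" where
  "inner_Rp f g = (LINT a:{0<..}|lborel. f a * cnj (g a) / complex_of_real a)"

definition W_Aff :: "(real \<Rightarrow> complex) \<Rightarrow> (real \<Rightarrow> complex) \<Rightarrow> real \<Rightarrow> real \<Rightarrow> complex" where
  "W_Aff \<psi> \<phi> x a = (LINT u|lborel. \<psi> (a * lam u) * cnj (\<phi> (a * lam (- u)))
                          * exp (- 2 * complex_of_real pi * \<i> * complex_of_real (x * u)))"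

definition R_pref :: "real \<Rightarrow> real" where
  "R_pref v = (if v = 0 then 2 else v * (1 - exp v) / (1 + v - exp v))"

definition R_Aff :: "real \<Rightarrow> real \<Rightarrow> (real \<Rightarrow> complex) \<Rightarrow> real \<Rightarrow> complex" where
  "R_Aff x a \<psi> r = (let v = lam_inv (r / a) in
      exp (2 * complex_of_real pi * \<i> * complex_of_real (x * v)) * complex_of_real (R_pref v)
      * \<psi> (r * exp (- v)))"

end

theory Submission
  imports Defs
begin

text \<open>
  Substituting \<open>r = a \<lambda>(-u)\<close> in the inner product gives the Wigner integral.
  The map \<open>u \<mapsto> a \<lambda>(-u)\<close> is a diffeomorphism of \<open>\<real> - {0}\<close> onto \<open>(0,\<infinity>) - {a}\<close>
  with inverse \<open>r \<mapsto> -\<lambda>\<^sup>-\<^sup>1(r/a)\<close>; the identity \<open>\<lambda>(v) e\<^sup>-\<^sup>v = \<lambda>(-v)\<close> turns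
  \<open>\<psi>(r e\<^sup>-\<^sup>v)\<close> into \<open>\<psi>(a \<lambda>(u))\<close>, and the prefactor of \<open>R\<^sub>A\<^sub>f\<^sub>f\<close> equals \<open>\<lambda>/\<lambda>'\<close>,
  so together with the Jacobian \<open>a \<lambda>'\<close> it cancels the measure \<open>dr/r\<close>.
  Both sides are Lebesgue integrals, and the change of variables also covers the case
  where they are not integrable and both vanish.
\<close>

lemma add_one_less_exp: "x \<noteq> 0 \<Longrightarrow> 1 + x < exp (x::real)"
  using exp_minus_greater[of "-x"] by simp

lemma exp_minus_one_less_mult_exp: "x \<noteq> 0 \<Longrightarrow> exp x - 1 < x * exp (x::real)"
  using add_one_less_exp[of "-x"] by (simp add: exp_minus field_simps)

lemma lam_pos: "lam u > 0"
proof (cases u "0::real" rule: linorder_cases)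
  case less
  then have "exp u < 1" by simp
  with less show ?thesis by (simp add: lam_def divide_neg_neg mult_neg_pos)
qed (simp_all add: lam_def)

lemma lam_eq_exp_mult_lam_minus: "lam u = exp u * lam (- u)"
proof (cases "u = 0")
  case False
  then have "exp u - 1 \<noteq> 0" "exp (- u) - 1 \<noteq> 0" by auto
  with False show ?thesis by (simp add: lam_def exp_minus field_simps)
qed (simp add: lam_def)

lemma lam_minus: "t \<noteq> 0 \<Longrightarrow> lam (- t) = t / (exp t - 1)"
  using lam_eq_exp_mult_lam_minus[of t] by (simp add: lam_def field_simps)

lemma lam_zero [simp]: "lam 0 = 1"
  by (simp add: lam_def)

lemma lam_gt_one: "u > 0 \<Longrightarrow> lam u > 1"
  using exp_minus_one_less_mult_exp[of u] by (simp add: lam_def)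

lemma lam_less_one: "u < 0 \<Longrightarrow> lam u < 1"
  using exp_minus_one_less_mult_exp[of u] by (simp add: lam_def field_simps)

definition lam' :: "real \<Rightarrow> real" where
  "lam' u = exp u * (exp u - 1 - u) / (exp u - 1)\<^sup>2"

lemma lam_has_real_derivative:
  assumes "u \<noteq> 0" shows "(lam has_real_derivative lam' u) (at u)"
proof -
  have "exp u - 1 \<noteq> 0" using assms by simp
  then have "((\<lambda>u. u * exp u / (exp u - 1)) has_real_derivative lam' u) (at u)"
    by (auto intro!: derivative_eq_intros simp: lam'_def algebra_simps power2_eq_square)
  then show ?thesis
    by (rule has_field_derivative_transform_within_open[where S="- {0}"])
       (use assms in \<open>auto simp: lam_def\<close>)
qed

lemma lam'_pos: "u \<noteq> 0 \<Longrightarrow> lam' u > 0"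
  using add_one_less_exp[of u] by (auto simp: lam'_def)

lemma continuous_on_lam: "0 \<notin> S \<Longrightarrow> continuous_on S lam"
  by (metis continuous_at_imp_continuous_on DERIV_isCont lam_has_real_derivative)

lemma strict_mono_lam: "strict_mono lam"
proof (rule strict_monoI)
  have increasing: "lam u < lam w" if "u < w" "0 \<notin> {u..w}" for u w
  proof (rule DERIV_pos_imp_increasing[OF that(1)])
    fix y assume "u \<le> y" "y \<le> w"
    with that(2) have "y \<noteq> 0" by auto
    then show "\<exists>d. DERIV lam y :> d \<and> d > 0"
      using lam_has_real_derivative lam'_pos by blast
  qed
  fix u w :: real assume "u < w"
  then consider "w < 0 \<or> 0 < u" | "u \<le> 0" "0 \<le> w" by linarith
  then show "lam u < lam w"
  proof cases
    case 1 with \<open>u < w\<close> show ?thesis by (intro increasing) auto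
  next
    case 2 with \<open>u < w\<close> show ?thesis
      using lam_less_one[of u] lam_gt_one[of w] by (cases "u = 0"; cases "w = 0") auto
  qed
qed

lemma lam_inv_lam [simp]: "lam_inv (lam v) = v"
  unfolding lam_inv_def using strict_mono_lam
  by (auto intro!: the_equality dest: strict_mono_eq)

lemma lam_eq_one_iff: "lam u = 1 \<longleftrightarrow> u = 0"
  using strict_mono_eq[OF strict_mono_lam, of u 0] by (simp add: lam_def)

text \<open>Surjectivity by the intermediate value theorem: for \<open>r > 1\<close> the values
  \<open>\<lambda>(r - 1) \<le> r \<le> \<lambda>(r)\<close> bracket \<open>r\<close>, for \<open>r < 1\<close> the values
  \<open>\<lambda>(-2/r) \<le> r \<le> \<lambda>(r - 1)\<close> do, using \<open>e\<^sup>t \<ge> 1 + t + t\<^sup>2/2\<close>.\<close>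

lemma ex_lam_eq: assumes "r > 0" shows "\<exists>u. lam u = r"
proof -
  consider "r = 1" | "r > 1" | "r < 1" by linarith
  then show ?thesis
  proof cases
    case 1 then show ?thesis by (auto simp: lam_def)
  next
    case 2
    have "(r - 1) * exp (r - 1) \<le> r * (exp (r - 1) - 1)"
      using exp_ge_add_one_self[of "r - 1"] by (simp add: algebra_simps)
    with 2 have lower: "lam (r - 1) \<le> r" by (simp add: lam_def pos_divide_le_eq)
    from 2 have upper: "r \<le> lam r" by (simp add: lam_def pos_le_divide_eq)
    have "continuous_on {r - 1..r} lam" using 2 by (intro continuous_on_lam) auto
    then show ?thesis using IVT'[of lam, OF lower upper] by auto
  next
    case 3
    define t where "t = 2 / r"
    have "t > 2" using 3 assms by (simp add: t_def field_simps)
    with assms have "t > 1 - r" by linarith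
    have "t \<le> r * (t + t\<^sup>2 / 2)" using assms by (simp add: t_def field_simps power2_eq_square)
    also have "\<dots> \<le> r * (exp t - 1)"
      using exp_lower_Taylor_quadratic[of t] assms by (intro mult_left_mono) (auto simp: t_def)
    finally have lower: "lam (- t) \<le> r"
      using \<open>t > 1 - r\<close> 3 by (simp add: lam_minus pos_divide_le_eq)
    have "lam (r - 1) = (1 - r) / (exp (1 - r) - 1)" using 3 lam_minus[of "1 - r"] by simp
    then have upper: "r \<le> lam (r - 1)"
      using exp_minus_one_less_mult_exp[of "1 - r"] 3 by (simp add: pos_le_divide_eq algebra_simps)
    have "continuous_on {- t..r - 1} lam" using 3 by (intro continuous_on_lam) auto
    then show ?thesis using IVT'[of lam, OF lower upper] \<open>t > 1 - r\<close> by auto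
  qed
qed

lemma lam_lam_inv: "r > 0 \<Longrightarrow> lam (lam_inv r) = r"
  using ex_lam_eq lam_inv_lam by metis

lemma isCont_lam_inv: assumes "r > 0" "r \<noteq> 1" shows "isCont lam_inv r"
proof -
  define u where "u = lam_inv r"
  have r: "r = lam u" using lam_lam_inv assms by (simp add: u_def)
  with assms have "u \<noteq> 0" by (simp add: lam_eq_one_iff)
  have "isCont lam_inv (lam u)"
  proof (rule isCont_inverse_function[where d="\<bar>u\<bar> / 2" and f=lam and g=lam_inv and x=u])
    fix z assume "\<bar>z - u\<bar> \<le> \<bar>u\<bar> / 2"
    with \<open>u \<noteq> 0\<close> have "z \<noteq> 0" by auto
    then show "isCont lam z" using lam_has_real_derivative DERIV_isCont by blast
  qed (use \<open>u \<noteq> 0\<close> in auto)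
  with r show ?thesis by simp
qed

lemma image_scaled_lam_minus:
  assumes "a > 0" shows "(\<lambda>u. a * lam (- u)) ` (- {0}) = {0<..} - {a}"
proof
  show "(\<lambda>u. a * lam (- u)) ` (- {0}) \<subseteq> {0<..} - {a}"
    using assms lam_pos by (auto simp: lam_eq_one_iff)
  show "{0<..} - {a} \<subseteq> (\<lambda>u. a * lam (- u)) ` (- {0})"
  proof
    fix r assume r: "r \<in> {0<..} - {a}"
    with assms have "r = a * lam (- (- lam_inv (r / a)))" "- lam_inv (r / a) \<noteq> 0"
      using lam_lam_inv[of "r / a"] by (auto simp: lam_def)
    then show "r \<in> (\<lambda>u. a * lam (- u)) ` (- {0})" by blast
  qed
qed

lemma lam'_mult_R_pref: assumes "v \<noteq> 0" shows "lam' v * R_pref v = lam v"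
proof -
  define e where "e = exp v"
  have e: "e - 1 \<noteq> 0" "1 + v - e \<noteq> 0" using add_one_less_exp[OF assms] assms by (auto simp: e_def)
  have "lam' v * R_pref v = (e * v) * ((e - 1 - v) * (1 - e)) / ((e - 1) * (e - 1) * (1 + v - e))"
    using assms by (simp add: lam'_def R_pref_def e_def power2_eq_square)
  also have "(e - 1 - v) * (1 - e) = (e - 1) * (1 + v - e)" by (simp add: algebra_simps)
  also have "(e * v) * ((e - 1) * (1 + v - e)) / ((e - 1) * (e - 1) * (1 + v - e)) = lam v"
    using assms e by (simp add: lam_def e_def frac_eq_eq)
  finally show ?thesis .
qed

lemma continuous_on_R_pref: "continuous_on (- {0}) R_pref"
proof -
  have "continuous_on (- {0}) (\<lambda>v::real. v * (1 - exp v) / (1 + v - exp v))"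
  proof (rule continuous_on_divide)
    show "\<forall>v\<in>- {0}. 1 + v - exp v \<noteq> (0::real)"
      using add_one_less_exp by fastforce
  qed (intro continuous_intros)+
  then show ?thesis by (rule continuous_on_cong[THEN iffD1, rotated 2]) (auto simp: R_pref_def)
qed

lemma continuous_on_R_Aff:
  assumes "continuous_on {0<..} \<psi>" "a > 0"
  shows "continuous_on ({0<..} - {a}) (R_Aff x a \<psi>)"
proof -
  define V where "V r = lam_inv (r / a)" for r
  have V_nonzero: "V r \<noteq> 0" if "r \<in> {0<..} - {a}" for r
  proof
    assume "V r = 0"
    then have "r / a = 1" using lam_lam_inv[of "r / a"] that assms(2) by (simp add: V_def)
    with that assms(2) show False by simp
  qed
  have "V ` ({0<..} - {a}) \<subseteq> - {0}" using V_nonzero by (intro image_subsetI) simp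
  have "isCont V r" if "r \<in> {0<..} - {a}" for r
  proof -
    have "isCont lam_inv (r / a)" using that assms(2) by (intro isCont_lam_inv) auto
    moreover have "isCont (\<lambda>r. r / a) r" using assms(2) by (intro continuous_intros) auto
    ultimately show ?thesis unfolding V_def using isCont_o2 by blast
  qed
  then have cont_V: "continuous_on ({0<..} - {a}) V"
    by (rule continuous_at_imp_continuous_on[OF ballI])
  have "continuous_on ({0<..} - {a}) (\<lambda>r. R_pref (V r))"
    by (rule continuous_on_compose2[OF continuous_on_R_pref cont_V \<open>V ` ({0<..} - {a}) \<subseteq> - {0}\<close>])
  moreover have "continuous_on ({0<..} - {a}) (\<lambda>r. \<psi> (r * exp (- V r)))"
    by (rule continuous_on_compose2[OF assms(1)]) (auto intro!: continuous_intros cont_V)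
  ultimately have "continuous_on ({0<..} - {a}) (\<lambda>r. exp (2 * of_real pi * \<i> * of_real (x * V r))
      * of_real (R_pref (V r)) * \<psi> (r * exp (- V r)))"
    by (intro continuous_intros cont_V)
  then show ?thesis by (simp add: R_Aff_def V_def Let_def)
qed

lemma schwartz_pos_continuous_on:
  assumes "schwartz_pos \<psi>" shows "continuous_on {0<..} \<psi>"
proof -
  define f where "f x = \<psi> (exp x)" for x
  have "(f has_vector_derivative iter_deriv 1 f x) (at x)" for x
    using assms unfolding schwartz_pos_def schwartz_def f_def by (metis One_nat_def iter_deriv.simps(1))
  then have "continuous_on UNIV f"
    by (metis continuous_at_imp_continuous_on has_vector_derivative_continuous)
  then have "continuous_on {0<..} (\<lambda>r. f (ln r))"
    by (rule continuous_on_compose2) (auto intro!: continuous_intros)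
  then show ?thesis by (rule continuous_on_cong[THEN iffD1, rotated 2]) (auto simp: f_def)
qed

lemma set_lborel_integral_eq_lebesgue_open:
  fixes F :: "'a::euclidean_space \<Rightarrow> 'b::{banach, second_countable_topology}"
  assumes "S \<in> sets borel" "open T" "T \<subseteq> S" "countable (S - T)" "continuous_on T F"
  shows "(LINT x:S|lborel. F x) = (LINT x:T|lebesgue. F x)"
proof -
  have meas_T: "set_borel_measurable lborel T F"
    unfolding set_borel_measurable_def
    using borel_measurable_continuous_on_indicator[OF _ assms(5)] assms(2) by simp
  have meas_S: "set_borel_measurable lborel S F"
    unfolding set_borel_measurable_def
    by (rule measurable_discrete_difference[OF meas_T[unfolded set_borel_measurable_def], of "S - T"])
       (use assms in \<open>auto simp: indicator_def\<close>)
  have "AE x in lborel. x \<in> T \<longleftrightarrow> x \<in> S"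
    by (rule AE_I'[OF countable_imp_null_set_lborel[OF assms(4)]]) (use assms(3) in auto)
  then have "(LINT x:S|lborel. F x) = (LINT x:T|lborel. F x)"
    by (rule set_integral_cong_set[OF meas_T meas_S])
  also have "\<dots> = (LINT x:T|lebesgue. F x)"
    using integral_completion[OF meas_T[unfolded set_borel_measurable_def]]
    by (simp add: set_lebesgue_integral_def)
  finally show ?thesis .
qed

lemma set_lebesgue_integral_change_of_variables_real:
  fixes f :: "real \<Rightarrow> 'a::euclidean_space"
  assumes "S \<in> sets lebesgue" "\<And>x. x \<in> S \<Longrightarrow> (g has_field_derivative g' x) (at x within S)"
    and "inj_on g S"
  shows "(LINT y:g ` S|lebesgue. f y) = (LINT x:S|lebesgue. \<bar>g' x\<bar> *\<^sub>R f (g x))"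
proof (cases "f absolutely_integrable_on g ` S")
  case True
  then have "(\<lambda>x. \<bar>g' x\<bar> *\<^sub>R f (g x)) absolutely_integrable_on S \<and>
      integral S (\<lambda>x. \<bar>g' x\<bar> *\<^sub>R f (g x)) = integral (g ` S) f"
    using has_absolute_integral_change_of_variables_real[OF assms] by blast
  then show ?thesis
    using True by (simp add: set_lebesgue_integral_eq_integral(2))
next
  case False
  then have "\<not> (\<lambda>x. \<bar>g' x\<bar> *\<^sub>R f (g x)) absolutely_integrable_on S"
    using absolutely_integrable_change_of_variables_real[OF assms] by blast
  with False show ?thesis
    by (simp add: set_lebesgue_integral_def set_integrable_def not_integrable_integral_eq)
qed

lemma R_Aff_at_scaled_lam_minus:
  assumes "a > 0" "u \<noteq> 0"
  shows "\<bar>a * lam' (- u)\<bar> *\<^sub>R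
      (R_Aff x a \<psi> (a * lam (- u)) * cnj (\<phi> (a * lam (- u))) / of_real (a * lam (- u)))
    = \<psi> (a * lam u) * cnj (\<phi> (a * lam (- u))) * exp (- 2 * of_real pi * \<i> * of_real (x * u))"
proof -
  define E where "E = exp (- 2 * of_real pi * \<i> * of_real (x * u))"
  have pos: "a * lam' (- u) > 0" "a * lam (- u) > 0" using assms lam'_pos[of "- u"] lam_pos by auto
  have "a * lam (- u) * exp (- (- u)) = a * lam u" using lam_eq_exp_mult_lam_minus[of u] by simp
  then have "R_Aff x a \<psi> (a * lam (- u)) = of_real (R_pref (- u)) * \<psi> (a * lam u) * E"
    using assms(1) unfolding R_Aff_def E_def Let_def
    by (simp only: nonzero_mult_div_cancel_left lam_inv_lam) simp
  then have "\<bar>a * lam' (- u)\<bar> *\<^sub>R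
      (R_Aff x a \<psi> (a * lam (- u)) * cnj (\<phi> (a * lam (- u))) / of_real (a * lam (- u)))
      = of_real (a * lam' (- u) * R_pref (- u)) * (\<psi> (a * lam u) * cnj (\<phi> (a * lam (- u))) * E)
        / of_real (a * lam (- u))"
    using pos by (simp add: scaleR_conv_of_real)
  also have "\<dots> = \<psi> (a * lam u) * cnj (\<phi> (a * lam (- u))) * E"
    using lam'_mult_R_pref[of "- u"] assms lam_pos[of "- u"] by (simp add: mult.assoc)
  finally show ?thesis by (simp add: E_def)
qed

lemma W_Aff_eq_set_lebesgue_integral:
  assumes "continuous_on {0<..} \<psi>" "continuous_on {0<..} \<phi>" "a > 0"
  shows "W_Aff \<psi> \<phi> x a = (LINT u:- {0}|lebesgue. \<psi> (a * lam u) * cnj (\<phi> (a * lam (- u)))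
                          * exp (- 2 * complex_of_real pi * \<i> * complex_of_real (x * u)))"
proof -
  have "continuous_on (- {0}) (\<lambda>u. \<psi> (a * lam u) * cnj (\<phi> (a * lam (- u)))
                          * exp (- 2 * complex_of_real pi * \<i> * complex_of_real (x * u)))"
    using assms(3) lam_pos
    by (intro continuous_intros continuous_on_compose2[OF assms(1)] continuous_on_compose2[OF assms(2)]
          continuous_on_compose2[OF continuous_on_lam[of "- {0}"]]) auto
  then have "(LINT u:UNIV|lborel. \<psi> (a * lam u) * cnj (\<phi> (a * lam (- u)))
      * exp (- 2 * complex_of_real pi * \<i> * complex_of_real (x * u)))
    = (LINT u:- {0}|lebesgue. \<psi> (a * lam u) * cnj (\<phi> (a * lam (- u)))
      * exp (- 2 * complex_of_real pi * \<i> * complex_of_real (x * u)))"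
    by (intro set_lborel_integral_eq_lebesgue_open) auto
  then show ?thesis by (simp add: W_Aff_def set_lebesgue_integral_def)
qed

lemma inner_Rp_R_Aff_eq_set_lebesgue_integral:
  assumes "continuous_on {0<..} \<psi>" "continuous_on {0<..} \<phi>" "a > 0"
  shows "inner_Rp (R_Aff x a \<psi>) \<phi> = (LINT r:{0<..} - {a}|lebesgue. R_Aff x a \<psi> r * cnj (\<phi> r) / of_real r)"
proof -
  have "continuous_on ({0<..} - {a}) (\<lambda>r. R_Aff x a \<psi> r * cnj (\<phi> r) / of_real r)"
    using continuous_on_R_Aff[OF assms(1,3)]
    by (intro continuous_intros continuous_on_subset[OF assms(2)]) auto
  then show ?thesis
    unfolding inner_Rp_def
    by (intro set_lborel_integral_eq_lebesgue_open) (auto intro: countable_subset[of _ "{a}"])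
qed

lemma scaled_lam_minus_has_real_derivative:
  "u \<noteq> 0 \<Longrightarrow> ((\<lambda>u. a * lam (- u)) has_real_derivative - (a * lam' (- u))) (at u)"
  using DERIV_cmult[OF DERIV_chain2[OF lam_has_real_derivative[of "- u"] DERIV_minus[OF DERIV_ident]],
      of a]
  by simp

lemma inj_scaled_lam_minus: "a \<noteq> 0 \<Longrightarrow> inj (\<lambda>u. a * lam (- u))"
  by (auto intro!: injI simp: strict_mono_eq[OF strict_mono_lam])

theorem mainTheorem18:
  fixes \<psi> \<phi> :: "real \<Rightarrow> complex" and x a :: real
  assumes "schwartz_pos \<psi>" and "schwartz_pos \<phi>" and "a > 0"
  shows "W_Aff \<psi> \<phi> x a = inner_Rp (R_Aff x a \<psi>) \<phi>"
proof -
  define g where "g u = a * lam (- u)" for u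
  define H where "H r = R_Aff x a \<psi> r * cnj (\<phi> r) / complex_of_real r" for r
  have cont: "continuous_on {0<..} \<psi>" "continuous_on {0<..} \<phi>"
    using assms(1,2) by (simp_all add: schwartz_pos_continuous_on)
  have "W_Aff \<psi> \<phi> x a = (LINT u:- {0}|lebesgue. \<bar>- (a * lam' (- u))\<bar> *\<^sub>R H (g u))"
    unfolding W_Aff_eq_set_lebesgue_integral[OF cont assms(3)] H_def g_def
    using R_Aff_at_scaled_lam_minus[OF assms(3)] by (intro set_lebesgue_integral_cong) auto
  also have "\<dots> = (LINT r:g ` (- {0})|lebesgue. H r)"
    unfolding g_def
    using scaled_lam_minus_has_real_derivative inj_on_subset[OF inj_scaled_lam_minus] assms(3)
    by (intro set_lebesgue_integral_change_of_variables_real[symmetric])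
       (auto intro: has_field_derivative_at_within)
  also have "\<dots> = inner_Rp (R_Aff x a \<psi>) \<phi>"
    unfolding g_def H_def image_scaled_lam_minus[OF assms(3)]
    by (rule inner_Rp_R_Aff_eq_set_lebesgue_integral[OF cont assms(3), symmetric])
  finally show ?thesis .
qed

end
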